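(* Let $G$ be the full group of a Bratteli diagram whose path space $X$ is a Cantor set and on which $G$ acts minimally. Let $\mu$ be an ergodic $G$-invariant Borel probability measure on $X$. Let $B$ be a clopen set and, for each $n$, let $B_n$ be a $G_n$-invariant clopen set, such that $\mu(B_n)\to\mu(B)>0$ as $n\to\infty$. Then for every clopen set $A$, $\mu(A\cap B_n)\to\mu(A)\mu(B)$ as $n\to\infty$.
   Context: Bratteli diagram: levels $V_0=\{v_0\},V_1,\dots$, finite edge sets $E_n$ from $V_{n-1}$ to $V_n$; path space $X$ of infinite paths from $v_0$ with the cylinder topology. $G_n$: group of homeomorphisms of $X$ replacing the first $n$ edges of each path by another path from $v_0$ to the same vertex of $V_n$ (depending only on those edges) and leaving the rest; full group $G=\bigcup_nG_n$. A set is $G_n$-invariant if it is mapped onto itself by every element of $G_n$. *)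

theory Defs
  imports "HOL-Analysis.Analysis" "HOL-Probability.Probability"
begin

definition bratteli ::
  "(nat \<Rightarrow> 'v set) \<Rightarrow> (nat \<Rightarrow> 'e set) \<Rightarrow> ('e \<Rightarrow> 'v) \<Rightarrow> ('e \<Rightarrow> 'v) \<Rightarrow> 'v \<Rightarrow> bool" where
  "bratteli V E src rng v0 \<longleftrightarrow>
     V 0 = {v0} \<and> (\<forall>n. finite (V n)) \<and> (\<forall>n. finite (E n)) \<and> E 0 = {} \<and>
     (\<forall>n\<ge>1. \<forall>e\<in>E n. src e \<in> V (n - 1) \<and> rng e \<in> V n)"

text \<open>Infinite paths from v0: x i is the edge from level i to level i+1, i.e. x i \<in> E (Suc i).\<close>
definition path_space ::
  "(nat \<Rightarrow> 'e set) \<Rightarrow> ('e \<Rightarrow> 'v) \<Rightarrow> ('e \<Rightarrow> 'v) \<Rightarrow> 'v \<Rightarrow> (nat \<Rightarrow> 'e) set" where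
  "path_space E src rng v0 =
     {x. (\<forall>i. x i \<in> E (Suc i)) \<and> src (x 0) = v0 \<and> (\<forall>i. rng (x i) = src (x (Suc i)))}"

definition path_topology ::
  "(nat \<Rightarrow> 'e set) \<Rightarrow> ('e \<Rightarrow> 'v) \<Rightarrow> ('e \<Rightarrow> 'v) \<Rightarrow> 'v \<Rightarrow> (nat \<Rightarrow> 'e) topology" where
  "path_topology E src rng v0 =
     subtopology (product_topology (\<lambda>i. discrete_topology (E (Suc i))) UNIV)
                 (path_space E src rng v0)"

text \<open>G_n: homeomorphisms of X that change only the first n edges of a path, the new
  first n edges depending only on the old first n edges (the end vertex at level n is then
  automatically preserved, since the path continues with the same edge n+1).\<close>
definition Gn :: "(nat \<Rightarrow> 'e) topology \<Rightarrow> nat \<Rightarrow> ((nat \<Rightarrow> 'e) \<Rightarrow> (nat \<Rightarrow> 'e)) set" where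
  "Gn T n = {g. homeomorphic_map T T g \<and>
       (\<forall>x\<in>topspace T. \<forall>i\<ge>n. g x i = x i) \<and>
       (\<forall>x\<in>topspace T. \<forall>y\<in>topspace T. (\<forall>i<n. x i = y i) \<longrightarrow> (\<forall>i<n. g x i = g y i))}"

definition full_group :: "(nat \<Rightarrow> 'e) topology \<Rightarrow> ((nat \<Rightarrow> 'e) \<Rightarrow> (nat \<Rightarrow> 'e)) set" where
  "full_group T = (\<Union>n. Gn T n)"

definition invariant_set :: "('a \<Rightarrow> 'a) set \<Rightarrow> 'a set \<Rightarrow> bool" where
  "invariant_set H A \<longleftrightarrow> (\<forall>g\<in>H. g ` A = A)"

definition minimal_action :: "'a topology \<Rightarrow> ('a \<Rightarrow> 'a) set \<Rightarrow> bool" where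
  "minimal_action T H \<longleftrightarrow> (\<forall>x\<in>topspace T. T closure_of ((\<lambda>g. g x) ` H) = topspace T)"

definition cantor_space :: "'a topology \<Rightarrow> bool" where
  "cantor_space T \<longleftrightarrow> topspace T \<noteq> {} \<and> compact_space T \<and> metrizable_space T \<and>
     (\<forall>x\<in>topspace T. connected_component_of_set T x = {x}) \<and>
     T derived_set_of (topspace T) = topspace T"

definition clopen_in :: "'a topology \<Rightarrow> 'a set \<Rightarrow> bool" where
  "clopen_in T A \<longleftrightarrow> openin T A \<and> closedin T A"

definition borel_prob :: "'a topology \<Rightarrow> 'a measure \<Rightarrow> bool" where
  "borel_prob T \<mu> \<longleftrightarrow> prob_space \<mu> \<and> space \<mu> = topspace T \<and>
     sets \<mu> = sigma_sets (topspace T) {U. openin T U}"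

definition invariant_measure :: "('a \<Rightarrow> 'a) set \<Rightarrow> 'a measure \<Rightarrow> bool" where
  "invariant_measure H \<mu> \<longleftrightarrow>
     (\<forall>g\<in>H. \<forall>A\<in>sets \<mu>. g -` A \<inter> space \<mu> \<in> sets \<mu> \<and> measure \<mu> (g -` A \<inter> space \<mu>) = measure \<mu> A)"

definition ergodic_measure :: "('a \<Rightarrow> 'a) set \<Rightarrow> 'a measure \<Rightarrow> bool" where
  "ergodic_measure H \<mu> \<longleftrightarrow>
     (\<forall>A\<in>sets \<mu>. invariant_set H A \<longrightarrow> measure \<mu> A = 0 \<or> measure \<mu> A = 1)"

end

theory Submission
  imports Defs
begin

text \<open>
  Fix a clopen set A; it is determined by the first m edges of a path. For n \<ge> m let
  f_n(x) be the proportion of the paths from v_0 to the vertex that x passes at level n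
  whose first n edges extend to paths in A. Exchanging two prefixes that end at the same
  vertex is an element of G_n, so an invariant measure gives all cylinders over such prefixes
  the same mass inside any G_n-invariant set S; hence the integral of f_n over S is
  \<mu>(A \<inter> S), i.e. f_n is the conditional expectation of the indicator of A given the
  G_n-invariant sets. In particular the integral of f_n f_k equals that of f_k^2 for n \<le> k,
  so the L^2 norms of the f_n decrease and (f_n) is Cauchy in L^2. A subsequence converges
  almost everywhere; its limit depends only on the tail of the path, so its level sets are
  invariant under the full group and ergodicity makes it the constant \<mu>(A). Hence
  f_n \<rightarrow> \<mu>(A) in L^1, and |\<mu>(A \<inter> B_n) - \<mu>(A) \<mu>(B_n)| is at most the integral of
  |f_n - \<mu>(A)|, which tends to 0.
\<close>

section \<open>Sequences with orthogonal increments\<close>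

lemma (in finite_measure) integrable_bounded:
  fixes h :: "'a \<Rightarrow> real"
  assumes "h \<in> borel_measurable M" "\<And>x. x \<in> space M \<Longrightarrow> \<bar>h x\<bar> \<le> B"
  shows "integrable M h"
  using assms by (intro integrable_const_bound[where B=B]) auto

lemma (in prob_space) square_integral_le_integral_square:
  fixes h :: "'a \<Rightarrow> real"
  assumes "integrable M h" "integrable M (\<lambda>x. (h x)\<^sup>2)"
  shows "(\<integral>x. h x \<partial>M)\<^sup>2 \<le> (\<integral>x. (h x)\<^sup>2 \<partial>M)"
  using variance_positive[of h] variance_eq[OF assms] by simp

lemma AE_convergent_if_summable_integral_increments:
  fixes g :: "nat \<Rightarrow> 'a \<Rightarrow> real"
  assumes [measurable]: "\<And>j. g j \<in> borel_measurable M"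
    and int: "\<And>j. integrable M (\<lambda>x. \<bar>g (Suc j) x - g j x\<bar>)"
    and sum: "summable (\<lambda>j. \<integral>x. \<bar>g (Suc j) x - g j x\<bar> \<partial>M)"
  shows "AE x in M. convergent (\<lambda>j. g j x)"
proof -
  define d where "d j x = \<bar>g (Suc j) x - g j x\<bar>" for j x
  have [measurable]: "d j \<in> borel_measurable M" for j
    unfolding d_def by measurable
  have "(\<integral>\<^sup>+x. (\<Sum>j. ennreal (d j x)) \<partial>M) = (\<Sum>j. \<integral>\<^sup>+x. ennreal (d j x) \<partial>M)"
    by (rule nn_integral_suminf) measurable
  also have "\<dots> = (\<Sum>j. ennreal (\<integral>x. d j x \<partial>M))"
    using int by (subst nn_integral_eq_integral) (auto simp: d_def[abs_def])
  also have "\<dots> = ennreal (\<Sum>j. \<integral>x. d j x \<partial>M)"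
    using sum by (intro suminf_ennreal2) (auto simp: d_def)
  finally have "(\<integral>\<^sup>+x. (\<Sum>j. ennreal (d j x)) \<partial>M) \<noteq> \<infinity>"
    by simp
  then have "AE x in M. (\<Sum>j. ennreal (d j x)) \<noteq> \<infinity>"
    by (intro nn_integral_PInf_AE) measurable
  then show ?thesis
  proof eventually_elim
    fix x assume "(\<Sum>j. ennreal (d j x)) \<noteq> \<infinity>"
    then have "summable (\<lambda>j. norm (g (Suc j) x - g j x))"
      by (intro summable_suminf_not_top) (auto simp: d_def)
    then have "convergent (\<lambda>n. \<Sum>j<n. g (Suc j) x - g j x)"
      unfolding summable_iff_convergent[symmetric] by (rule summable_norm_cancel)
    then have "convergent (\<lambda>n. g n x - g 0 x)"
      using sum_lessThan_telescope[of "\<lambda>j. g j x"] by simp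
    then show "convergent (\<lambda>j. g j x)"
      using convergent_add_const_right_iff[of "\<lambda>n. g n x" "- g 0 x"] by simp
  qed
qed

lemma exists_strict_mono_ge: "\<exists>r :: nat \<Rightarrow> nat. strict_mono r \<and> (\<forall>j. N j \<le> r j)"
proof (intro exI conjI allI)
  show "strict_mono (\<lambda>j. j + (\<Sum>i\<le>j. N i))"
    by (rule strict_monoI_Suc) simp
  show "N j \<le> j + (\<Sum>i\<le>j. N i)" for j
    using member_le_sum[of j "{..j}" N] by simp
qed

lemma (in prob_space) AE_eq_const_if_level_sets_trivial:
  fixes F :: "'a \<Rightarrow> real"
  assumes int: "integrable M F" and mean: "(\<integral>x. F x \<partial>M) = c"
    and above: "measure M {x\<in>space M. c < F x} \<in> {0, 1}"
    and below: "measure M {x\<in>space M. F x < c} \<in> {0, 1}"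
  shows "AE x in M. F x = c"
proof -
  have [measurable]: "F \<in> borel_measurable M"
    using int by (rule borel_measurable_integrable)
  have "measure M {x\<in>space M. c < F x} \<noteq> 1"
  proof
    assume "measure M {x\<in>space M. c < F x} = 1"
    then have "AE x in M. c < F x" by (auto dest: AE_prob_1)
    then have "(\<integral>x. c \<partial>M) < (\<integral>x. F x \<partial>M)"
      using int by (intro integral_less_AE_space) (auto simp: emeasure_space_1)
    then show False using mean by (simp add: prob_space)
  qed
  moreover have "measure M {x\<in>space M. F x < c} \<noteq> 1"
  proof
    assume "measure M {x\<in>space M. F x < c} = 1"
    then have "AE x in M. F x < c" by (auto dest: AE_prob_1)
    then have "(\<integral>x. F x \<partial>M) < (\<integral>x. c \<partial>M)"
      using int by (intro integral_less_AE_space) (auto simp: emeasure_space_1)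
    then show False using mean by (simp add: prob_space)
  qed
  ultimately have "prob {x\<in>space M. c < F x} = 0" "prob {x\<in>space M. F x < c} = 0"
    using above below by auto
  then have "AE x in M. x \<notin> {x\<in>space M. c < F x}" "AE x in M. x \<notin> {x\<in>space M. F x < c}"
    by (simp_all add: prob_eq_0)
  with AE_space show ?thesis by eventually_elim auto
qed

locale unit_interval_sequence = prob_space M for M :: "'a measure" +
  fixes f :: "nat \<Rightarrow> 'a \<Rightarrow> real"
  assumes measurable_f [measurable]: "\<And>n. f n \<in> borel_measurable M"
    and f_range: "\<And>n x. x \<in> space M \<Longrightarrow> 0 \<le> f n x \<and> f n x \<le> 1"
begin

lemma abs_f_minus_le_1: "x \<in> space M \<Longrightarrow> 0 \<le> c \<Longrightarrow> c \<le> 1 \<Longrightarrow> \<bar>f n x - c\<bar> \<le> 1"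
  using f_range[of x n] by auto

lemma abs_f_diff_le_1: "x \<in> space M \<Longrightarrow> \<bar>f n x - f k x\<bar> \<le> 1"
  using f_range[of x n] f_range[of x k] by auto

lemma integrable_f_mult [simp]: "integrable M (\<lambda>x. f n x * f k x)"
  using f_range by (intro integrable_bounded[where B=1]) (auto simp: abs_mult mult_le_one)

lemma integrable_f_square [simp]: "integrable M (\<lambda>x. (f n x)\<^sup>2)"
  using integrable_f_mult[of n n] by (simp add: power2_eq_square)

lemma integrable_f_diff_square [simp]: "integrable M (\<lambda>x. (f n x - f k x)\<^sup>2)"
  using abs_f_diff_le_1 by (intro integrable_bounded[where B=1]) (auto simp: abs_square_le_1)

lemma integrable_f [simp]: "integrable M (f n)"
  using f_range by (intro integrable_bounded[where B=1]) auto

lemma integral_f_range: "0 \<le> (\<integral>x. f n x \<partial>M) \<and> (\<integral>x. f n x \<partial>M) \<le> 1"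
proof
  show "0 \<le> (\<integral>x. f n x \<partial>M)"
    using f_range by (intro integral_nonneg_AE AE_I2) auto
  have "(\<integral>x. f n x \<partial>M) \<le> (\<integral>x. 1 \<partial>M)"
    using f_range by (intro integral_mono) auto
  then show "(\<integral>x. f n x \<partial>M) \<le> 1" by (simp add: prob_space)
qed

lemma AE_convergent_subseq_if_L2_Cauchy:
  assumes Cauchy: "\<And>\<epsilon>. 0 < \<epsilon> \<Longrightarrow> \<exists>N. \<forall>n\<ge>N. \<forall>k\<ge>n. (\<integral>x. (f n x - f k x)\<^sup>2 \<partial>M) \<le> \<epsilon>"
  shows "\<exists>r. strict_mono r \<and> (AE x in M. convergent (\<lambda>j. f (r j) x))"
proof -
  obtain N where N: "\<And>j n k. N j \<le> n \<Longrightarrow> n \<le> k \<Longrightarrow> (\<integral>x. (f n x - f k x)\<^sup>2 \<partial>M) \<le> (1/4)^j"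
    using Cauchy[of "(1/4)^_"] by (metis zero_less_divide_1_iff zero_less_numeral zero_less_power)
  obtain r where r: "strict_mono r" "\<And>j. N j \<le> r j"
    using exists_strict_mono_ge by blast
  have int_incr: "integrable M (\<lambda>x. \<bar>f (r (Suc j)) x - f (r j) x\<bar>)" for j
    using abs_f_diff_le_1 by (intro integrable_bounded[where B=1]) auto
  have incr: "(\<integral>x. \<bar>f (r (Suc j)) x - f (r j) x\<bar> \<partial>M) \<le> (1/2)^j" for j
  proof -
    have "(\<integral>x. \<bar>f (r (Suc j)) x - f (r j) x\<bar> \<partial>M)\<^sup>2 \<le> (\<integral>x. \<bar>f (r (Suc j)) x - f (r j) x\<bar>\<^sup>2 \<partial>M)"
      using int_incr by (intro square_integral_le_integral_square) simp_all
    also have "\<dots> = (\<integral>x. (f (r j) x - f (r (Suc j)) x)\<^sup>2 \<partial>M)"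
      by (simp add: power2_commute)
    also have "\<dots> \<le> (1/4)^j"
      using r by (intro N) (auto simp: strict_mono_Suc_iff less_imp_le)
    also have "\<dots> = ((1/2)^j)\<^sup>2"
      by (simp add: power_mult_distrib[symmetric] power2_eq_square)
    finally show ?thesis by (rule power2_le_imp_le) simp
  qed
  have "summable (\<lambda>j. \<integral>x. \<bar>f (r (Suc j)) x - f (r j) x\<bar> \<partial>M)"
    using incr by (intro summable_comparison_test'[OF summable_geometric[of "1/2"]]) auto
  then show ?thesis
    using r(1) int_incr by (auto intro!: AE_convergent_if_summable_integral_increments)
qed

lemma tendsto_L2_const_if_AE_convergent:
  assumes mean: "\<And>n. (\<integral>x. f n x \<partial>M) = c"
    and conv: "AE x in M. convergent (\<lambda>n. f n x)"
    and above: "measure M {x\<in>space M. c < lim (\<lambda>n. f n x)} \<in> {0, 1}"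
    and below: "measure M {x\<in>space M. lim (\<lambda>n. f n x) < c} \<in> {0, 1}"
  shows "(\<lambda>n. \<integral>x. (f n x - c)\<^sup>2 \<partial>M) \<longlonglongrightarrow> 0"
proof -
  define F where "F x = lim (\<lambda>n. f n x)" for x
  have [measurable]: "F \<in> borel_measurable M"
    unfolding F_def by (rule borel_measurable_lim_metric) simp
  have lim: "AE x in M. (\<lambda>n. f n x) \<longlonglongrightarrow> F x"
    using conv by eventually_elim (simp add: F_def convergent_LIMSEQ_iff)
  have bound: "AE x in M. norm (f n x) \<le> 1" for n
    using f_range by (intro AE_I2) auto
  have "integrable M F"
    by (rule integrable_dominated_convergence[where w="\<lambda>x. 1" and s=f]) (use lim bound in auto)
  moreover have "(\<lambda>n. \<integral>x. f n x \<partial>M) \<longlonglongrightarrow> (\<integral>x. F x \<partial>M)"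
    using lim bound by (intro integral_dominated_convergence[where w="\<lambda>x. 1"]) auto
  then have "(\<integral>x. F x \<partial>M) = c"
    using mean by (simp add: LIMSEQ_const_iff)
  ultimately have F_eq: "AE x in M. F x = c"
    using above below unfolding F_def[symmetric] by (rule AE_eq_const_if_level_sets_trivial)
  have c_range: "0 \<le> c" "c \<le> 1"
    using integral_f_range[of 0] mean by auto
  have "(\<lambda>n. \<integral>x. (f n x - c)\<^sup>2 \<partial>M) \<longlonglongrightarrow> (\<integral>x. 0 \<partial>M)"
  proof (rule integral_dominated_convergence[where w="\<lambda>x. 1"])
    show "AE x in M. (\<lambda>n. (f n x - c)\<^sup>2) \<longlonglongrightarrow> 0"
      using lim F_eq
    proof eventually_elim
      fix x assume "(\<lambda>n. f n x) \<longlonglongrightarrow> F x" "F x = c"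
      then have "(\<lambda>n. (f n x - c)\<^sup>2) \<longlonglongrightarrow> (c - c)\<^sup>2"
        by (intro tendsto_intros) auto
      then show "(\<lambda>n. (f n x - c)\<^sup>2) \<longlonglongrightarrow> 0" by simp
    qed
    show "AE x in M. norm ((f n x - c)\<^sup>2) \<le> 1" for n
      by (intro AE_I2) (simp add: abs_square_le_1 abs_f_minus_le_1[OF _ c_range])
  qed auto
  then show ?thesis by simp
qed

lemma L2_Cauchy_if_orthogonal_increments:
  assumes orth: "\<And>n k. n \<le> k \<Longrightarrow> (\<integral>x. f n x * f k x \<partial>M) = (\<integral>x. (f k x)\<^sup>2 \<partial>M)"
  shows "convergent (\<lambda>n. \<integral>x. (f n x)\<^sup>2 \<partial>M)"
    and "0 < \<epsilon> \<Longrightarrow> \<exists>N. \<forall>n\<ge>N. \<forall>k\<ge>n. (\<integral>x. (f n x - f k x)\<^sup>2 \<partial>M) \<le> \<epsilon>"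
proof -
  define e where "e = (\<lambda>n. \<integral>x. (f n x)\<^sup>2 \<partial>M)"
  have dist: "(\<integral>x. (f n x - f k x)\<^sup>2 \<partial>M) = e n - e k" if "n \<le> k" for n k
  proof -
    have "(\<integral>x. (f n x - f k x)\<^sup>2 \<partial>M) = (\<integral>x. (f n x)\<^sup>2 + (f k x)\<^sup>2 - 2 * (f n x * f k x) \<partial>M)"
      by (rule Bochner_Integration.integral_cong[OF refl]) (simp add: power2_diff)
    also have "\<dots> = e n + e k - 2 * (\<integral>x. f n x * f k x \<partial>M)"
      by (simp add: e_def)
    finally show ?thesis
      using orth[OF that] by (simp add: e_def)
  qed
  have "decseq e"
  proof (rule decseq_SucI)
    fix n
    have "0 \<le> (\<integral>x. (f n x - f (Suc n) x)\<^sup>2 \<partial>M)"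
      by (intro integral_nonneg_AE) simp
    then show "e (Suc n) \<le> e n"
      using dist[of n "Suc n"] by simp
  qed
  moreover have "0 \<le> e n" for n
    unfolding e_def by (intro integral_nonneg_AE) simp
  ultimately obtain L where L: "e \<longlonglongrightarrow> L" "\<forall>n. L \<le> e n"
    using decseq_convergent[of e 0] by blast
  then show "convergent (\<lambda>n. \<integral>x. (f n x)\<^sup>2 \<partial>M)"
    unfolding e_def convergent_def by blast
  assume \<epsilon>: "0 < \<epsilon>"
  obtain N where N: "\<forall>n\<ge>N. norm (e n - L) < \<epsilon>"
    using LIMSEQ_D[OF L(1) \<epsilon>] by blast
  have "e n - e k \<le> \<epsilon>" if "N \<le> n" for n k
    using N L(2) that by (smt (verit) real_norm_def)
  then show "\<exists>N. \<forall>n\<ge>N. \<forall>k\<ge>n. (\<integral>x. (f n x - f k x)\<^sup>2 \<partial>M) \<le> \<epsilon>"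
    using dist by (intro exI[of _ N]) simp
qed

lemma tendsto_L2_const_if_orthogonal_increments:
  assumes orth: "\<And>n k. n \<le> k \<Longrightarrow> (\<integral>x. f n x * f k x \<partial>M) = (\<integral>x. (f k x)\<^sup>2 \<partial>M)"
    and mean: "\<And>n. (\<integral>x. f n x \<partial>M) = c"
    and dichotomy: "\<And>r. strict_mono r \<Longrightarrow>
        measure M {x\<in>space M. c < lim (\<lambda>j. f (r j) x)} \<in> {0, 1} \<and>
        measure M {x\<in>space M. lim (\<lambda>j. f (r j) x) < c} \<in> {0, 1}"
  shows "(\<lambda>n. \<integral>x. (f n x - c)\<^sup>2 \<partial>M) \<longlonglongrightarrow> 0"
proof -
  obtain L where L: "(\<lambda>n. \<integral>x. (f n x)\<^sup>2 \<partial>M) \<longlonglongrightarrow> L"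
    using L2_Cauchy_if_orthogonal_increments(1)[OF orth] unfolding convergent_def by blast
  obtain r where r: "strict_mono r" "AE x in M. convergent (\<lambda>j. f (r j) x)"
    using AE_convergent_subseq_if_L2_Cauchy[OF L2_Cauchy_if_orthogonal_increments(2)[OF orth]] by blast
  have var: "(\<integral>x. (f n x - c)\<^sup>2 \<partial>M) = (\<integral>x. (f n x)\<^sup>2 \<partial>M) - c\<^sup>2" for n
    using variance_eq[of "f n"] mean by simp
  interpret subseq: unit_interval_sequence M "\<lambda>j. f (r j)"
    using f_range by unfold_locales simp_all
  have "(\<lambda>j. (\<integral>x. (f (r j) x)\<^sup>2 \<partial>M) - c\<^sup>2) \<longlonglongrightarrow> 0"
    using subseq.tendsto_L2_const_if_AE_convergent[OF mean r(2)] dichotomy[OF r(1)]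
    by (simp add: var)
  moreover have "(\<lambda>j. (\<integral>x. (f (r j) x)\<^sup>2 \<partial>M) - c\<^sup>2) \<longlonglongrightarrow> L - c\<^sup>2"
    using LIMSEQ_subseq_LIMSEQ[OF L r(1)] unfolding o_def by (rule tendsto_diff) simp
  ultimately have "L - c\<^sup>2 = 0"
    by (rule LIMSEQ_unique[rotated])
  moreover have "(\<lambda>n. (\<integral>x. (f n x)\<^sup>2 \<partial>M) - c\<^sup>2) \<longlonglongrightarrow> L - c\<^sup>2"
    using L by (rule tendsto_diff) simp
  ultimately show ?thesis
    by (simp add: var)
qed

lemma tendsto_L1_const_if_orthogonal_increments:
  assumes orth: "\<And>n k. n \<le> k \<Longrightarrow> (\<integral>x. f n x * f k x \<partial>M) = (\<integral>x. (f k x)\<^sup>2 \<partial>M)"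
    and mean: "\<And>n. (\<integral>x. f n x \<partial>M) = c"
    and dichotomy: "\<And>r. strict_mono r \<Longrightarrow>
        measure M {x\<in>space M. c < lim (\<lambda>j. f (r j) x)} \<in> {0, 1} \<and>
        measure M {x\<in>space M. lim (\<lambda>j. f (r j) x) < c} \<in> {0, 1}"
  shows "(\<lambda>n. \<integral>x. \<bar>f n x - c\<bar> \<partial>M) \<longlonglongrightarrow> 0"
proof (rule real_tendsto_sandwich[OF _ _ tendsto_const])
  have c_range: "0 \<le> c" "c \<le> 1"
    using integral_f_range[of 0] mean by auto
  have abs_le: "x \<in> space M \<Longrightarrow> \<bar>f n x - c\<bar> \<le> 1" for n x
    by (rule abs_f_minus_le_1[OF _ c_range])
  have "integrable M (\<lambda>x. \<bar>f n x - c\<bar>)" "integrable M (\<lambda>x. \<bar>f n x - c\<bar>\<^sup>2)" for n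
    by (rule integrable_bounded[where B=1], simp, simp add: abs_le abs_square_le_1)+
  from square_integral_le_integral_square[OF this]
  have "(\<integral>x. \<bar>f n x - c\<bar> \<partial>M)\<^sup>2 \<le> (\<integral>x. (f n x - c)\<^sup>2 \<partial>M)" for n
    by simp
  then have "(\<integral>x. \<bar>f n x - c\<bar> \<partial>M) \<le> sqrt (\<integral>x. (f n x - c)\<^sup>2 \<partial>M)" for n
    by (rule real_le_rsqrt)
  then show "\<forall>\<^sub>F n in sequentially. (\<integral>x. \<bar>f n x - c\<bar> \<partial>M) \<le> sqrt (\<integral>x. (f n x - c)\<^sup>2 \<partial>M)"
    by (rule always_eventually[OF allI])
  have "0 \<le> (\<integral>x. \<bar>f n x - c\<bar> \<partial>M)" for n
    by (rule integral_nonneg_AE) simp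
  then show "\<forall>\<^sub>F n in sequentially. 0 \<le> (\<integral>x. \<bar>f n x - c\<bar> \<partial>M)"
    by (rule always_eventually[OF allI])
  show "(\<lambda>n. sqrt (\<integral>x. (f n x - c)\<^sup>2 \<partial>M)) \<longlonglongrightarrow> 0"
    using tendsto_real_sqrt[OF tendsto_L2_const_if_orthogonal_increments[OF assms]] by simp
qed

end

section \<open>Paths in a Bratteli diagram\<close>

definition path_prefix :: "nat \<Rightarrow> (nat \<Rightarrow> 'e) \<Rightarrow> (nat \<Rightarrow> 'e)" where
  "path_prefix n x = restrict x {..<n}"

definition splice :: "nat \<Rightarrow> (nat \<Rightarrow> 'e) \<Rightarrow> (nat \<Rightarrow> 'e) \<Rightarrow> (nat \<Rightarrow> 'e)" where
  "splice n p x = (\<lambda>i. if i < n then p i else x i)"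

definition prefix_swap :: "nat \<Rightarrow> (nat \<Rightarrow> 'e) \<Rightarrow> (nat \<Rightarrow> 'e) \<Rightarrow> (nat \<Rightarrow> 'e) \<Rightarrow> (nat \<Rightarrow> 'e)" where
  "prefix_swap n p q x =
     (if path_prefix n x = p then splice n q x
      else if path_prefix n x = q then splice n p x else x)"

lemma path_prefix_eq_iff: "path_prefix n x = path_prefix n y \<longleftrightarrow> (\<forall>i<n. x i = y i)"
  unfolding path_prefix_def by (metis lessThan_iff restrict_apply' restrict_ext)

lemma path_prefix_splice: "path_prefix n (splice n (path_prefix n z) x) = path_prefix n z"
  unfolding path_prefix_eq_iff by (simp add: splice_def path_prefix_def)

lemma splice_path_prefix: "path_prefix n x = p \<Longrightarrow> splice n p x = x"
  unfolding splice_def path_prefix_def by auto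

lemma splice_splice: "splice n p (splice n q x) = splice n p x"
  unfolding splice_def by auto

locale bratteli_diagram =
  fixes V :: "nat \<Rightarrow> 'v set" and E :: "nat \<Rightarrow> 'e set"
    and src rng :: "'e \<Rightarrow> 'v" and v0 :: 'v
  assumes bratteli: "bratteli V E src rng v0"
begin

abbreviation "X \<equiv> path_space E src rng v0"
abbreviation "T \<equiv> path_topology E src rng v0"
abbreviation "edge_product \<equiv> product_topology (\<lambda>i. discrete_topology (E (Suc i))) UNIV"

lemma topspace_T: "topspace T = X"
  by (auto simp: path_topology_def path_space_def topspace_product_topology PiE_def extensional_def)

lemma finite_V: "finite (V n)"
  using bratteli by (simp add: bratteli_def)

lemma finite_E: "finite (E n)"
  using bratteli by (simp add: bratteli_def)

lemma path_edge: "x \<in> X \<Longrightarrow> x i \<in> E (Suc i)"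
  by (simp add: path_space_def)

lemma src_path_in_V:
  assumes "x \<in> X" shows "src (x n) \<in> V n"
proof -
  have "\<forall>e\<in>E (Suc n). src e \<in> V n"
    using bratteli unfolding bratteli_def by (metis diff_Suc_1 le_add1 plus_1_eq_Suc)
  then show ?thesis using path_edge[OF assms] by blast
qed

lemma openin_finitely_determined:
  assumes det: "\<And>x y. x \<in> X \<Longrightarrow> y \<in> X \<Longrightarrow> \<forall>i<K. x i = y i \<Longrightarrow> P x \<Longrightarrow> P y"
  shows "openin T {x\<in>X. P x}"
proof -
  define U where "U = {y \<in> topspace edge_product. \<exists>x\<in>X. P x \<and> (\<forall>i<K. x i = y i)}"
  have "openin edge_product U"
    unfolding openin_product_topology_alt
  proof
    fix y assume "y \<in> U"
    then obtain x where x: "x \<in> X" "P x" "\<forall>i<K. x i = y i" and y: "y \<in> topspace edge_product"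
      by (auto simp: U_def)
    have yE: "y i \<in> E (Suc i)" for i
      using y by (auto simp: topspace_product_topology)
    define W where "W i = (if i < K then {y i} else E (Suc i))" for i
    have "Pi\<^sub>E UNIV W \<subseteq> U"
    proof
      fix z assume z: "z \<in> Pi\<^sub>E UNIV W"
      then have zW: "z i \<in> W i" for i
        by (simp add: PiE_iff)
      have "z i \<in> E (Suc i)" for i
        using zW[of i] yE[of i] by (cases "i < K") (simp_all add: W_def)
      moreover have "z i = y i" if "i < K" for i
        using zW[of i] that by (simp add: W_def)
      ultimately show "z \<in> U"
        using x by (auto simp: U_def topspace_product_topology)
    qed
    moreover have "finite {i. W i \<noteq> topspace (discrete_topology (E (Suc i)))}"
      by (rule finite_subset[of _ "{..<K}"]) (auto simp: W_def)
    ultimately show "\<exists>W. finite {i \<in> UNIV. W i \<noteq> topspace (discrete_topology (E (Suc i)))} \<and>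
        (\<forall>i\<in>UNIV. openin (discrete_topology (E (Suc i))) (W i)) \<and> y \<in> Pi\<^sub>E UNIV W \<and> Pi\<^sub>E UNIV W \<subseteq> U"
      using yE by (intro exI[of _ W]) (auto simp: W_def)
  qed
  moreover have "{x\<in>X. P x} = U \<inter> X"
    using det by (auto simp: U_def topspace_product_topology path_space_def)
  ultimately show ?thesis
    unfolding path_topology_def openin_subtopology by blast
qed

lemma openin_locally_determined:
  assumes A: "openin T A" and x: "x \<in> A"
  shows "\<exists>K. \<forall>y\<in>X. (\<forall>i<K. x i = y i) \<longrightarrow> y \<in> A"
proof -
  obtain U where U: "openin edge_product U"
    "A = U \<inter> X"
    using A unfolding path_topology_def openin_subtopology by blast
  moreover have "x \<in> U"
    using x U(2) by blast
  ultimately obtain W where W: "finite {i \<in> UNIV. W i \<noteq> topspace (discrete_topology (E (Suc i)))}"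
    "x \<in> Pi\<^sub>E UNIV W" "Pi\<^sub>E UNIV W \<subseteq> U"
    unfolding openin_product_topology_alt by blast
  obtain K where K: "{i. W i \<noteq> E (Suc i)} \<subseteq> {..<K}"
    using finite_nat_bounded[OF W(1)] by auto
  have "y \<in> A" if y: "y \<in> X" "\<forall>i<K. x i = y i" for y
  proof -
    have "y i \<in> W i" for i
    proof (cases "i < K")
      case True
      then show ?thesis using W(2) y(2) by (metis PiE_iff UNIV_I)
    next
      case False
      then show ?thesis using K path_edge[OF y(1)] by auto
    qed
    then show ?thesis
      using W(3) U(2) y(1) by auto
  qed
  then show ?thesis by blast
qed

lemma clopen_finitely_determined:
  assumes compact: "compact_space T" and A: "clopen_in T A"
  shows "\<exists>m. \<forall>x\<in>A. \<forall>y\<in>X. (\<forall>i<m. x i = y i) \<longrightarrow> y \<in> A"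
proof -
  obtain K where K: "\<And>x y. x \<in> A \<Longrightarrow> y \<in> X \<Longrightarrow> \<forall>i<K x. x i = y i \<Longrightarrow> y \<in> A"
    using openin_locally_determined A unfolding clopen_in_def by metis
  define nbhd where "nbhd x = {y\<in>X. \<forall>i<K x. x i = y i}" for x
  have "openin T (nbhd x)" for x
    unfolding nbhd_def by (rule openin_finitely_determined[of "K x"]) auto
  then have "\<forall>U\<in>nbhd ` A. openin T U"
    by blast
  moreover have "compactin T A"
    using A compact closedin_compact_space unfolding clopen_in_def by blast
  moreover have "A \<subseteq> \<Union> (nbhd ` A)"
    using A openin_subset[of T A] by (auto simp: nbhd_def clopen_in_def topspace_T)
  ultimately obtain \<F> where "finite \<F>" "\<F> \<subseteq> nbhd ` A" "A \<subseteq> \<Union> \<F>"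
    unfolding compactin_def by meson
  then obtain F where F: "F \<subseteq> A" "finite F" "A \<subseteq> \<Union> (nbhd ` F)"
    by (metis finite_subset_image)
  have "y \<in> A" if "x \<in> A" "y \<in> X" "\<forall>i<(\<Sum>z\<in>F. K z). x i = y i" for x y
  proof -
    obtain z where z: "z \<in> F" "x \<in> nbhd z"
      using F(3) \<open>x \<in> A\<close> by auto
    have "K z \<le> (\<Sum>z\<in>F. K z)"
      using F(2) z(1) by (simp add: member_le_sum)
    then have "\<forall>i<K z. z i = y i"
      using z(2) that(3) by (auto simp: nbhd_def)
    then show "y \<in> A"
      using K[of z y] z(1) F(1) that(2) by auto
  qed
  then show ?thesis by blast
qed

lemma splice_in_path_space:
  assumes x: "x \<in> X" and z: "z \<in> X" and src_eq: "src (x n) = src (z n)"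
  shows "splice n z x \<in> X"
proof -
  have "rng (splice n z x i) = src (splice n z x (Suc i))" for i
  proof -
    consider "Suc i < n" | "Suc i = n" | "n \<le> i" by linarith
    then show ?thesis
      using x z src_eq by cases (auto simp: splice_def path_space_def)
  qed
  then show ?thesis
    using x z by (auto simp: splice_def path_space_def)
qed

lemma continuous_map_finitely_determined:
  assumes gX: "\<And>x. x \<in> X \<Longrightarrow> g x \<in> X"
    and det: "\<And>k. \<exists>K. \<forall>x\<in>X. \<forall>y\<in>X. (\<forall>i<K. x i = y i) \<longrightarrow> g x k = g y k"
  shows "continuous_map T T g"
proof -
  have "continuous_map T (discrete_topology (E (Suc k))) (\<lambda>x. g x k)" for k
    unfolding continuous_map_def
  proof (intro conjI allI impI)
    show "(\<lambda>x. g x k) \<in> topspace T \<rightarrow> topspace (discrete_topology (E (Suc k)))"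
      using gX path_edge by (auto simp: topspace_T)
    obtain K where K: "\<forall>x\<in>X. \<forall>y\<in>X. (\<forall>i<K. x i = y i) \<longrightarrow> g x k = g y k"
      using det by blast
    show "openin T {x \<in> topspace T. g x k \<in> U}" for U
      unfolding topspace_T by (rule openin_finitely_determined[of K]) (use K in fastforce)
  qed
  then have "continuous_map T edge_product g"
    by (simp add: continuous_map_componentwise_UNIV)
  then show ?thesis
    using gX by (auto simp: path_topology_def continuous_map_in_subtopology topspace_T)
qed

definition prefixes_to :: "nat \<Rightarrow> 'v \<Rightarrow> (nat \<Rightarrow> 'e) set" where
  "prefixes_to n w = path_prefix n ` {x\<in>X. src (x n) = w}"

lemma src_eq_if_path_prefix_eq:
  assumes "x \<in> X" "y \<in> X" "path_prefix n x = path_prefix n y"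
  shows "src (x n) = src (y n)"
proof (cases n)
  case 0
  then show ?thesis using assms by (simp add: path_space_def)
next
  case (Suc k)
  then have "x k = y k"
    using assms(3) unfolding path_prefix_eq_iff by simp
  moreover have "src (x (Suc k)) = rng (x k)" "src (y (Suc k)) = rng (y k)"
    using assms(1,2) by (simp_all add: path_space_def)
  ultimately show ?thesis
    using Suc by simp
qed

lemma src_if_path_prefix_in_prefixes_to:
  assumes "p \<in> prefixes_to n w" "x \<in> X" "path_prefix n x = p"
  shows "src (x n) = w"
proof -
  obtain z where "z \<in> X" "src (z n) = w" "p = path_prefix n z"
    using assms(1) by (auto simp: prefixes_to_def)
  then show ?thesis
    using assms(2,3) src_eq_if_path_prefix_eq[of x z n] by simp
qed

lemma splice_prefix_in_path_space:
  assumes "p \<in> prefixes_to n w" "x \<in> X" "src (x n) = w"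
  shows "splice n p x \<in> X"
proof -
  obtain z where z: "z \<in> X" "src (z n) = w" "p = path_prefix n z"
    using assms(1) by (auto simp: prefixes_to_def)
  then have "splice n p x = splice n z x"
    by (auto simp: splice_def path_prefix_def)
  then show ?thesis
    using splice_in_path_space[of x z n] z assms(2,3) by simp
qed

lemma path_prefix_splice_prefixes_to: "p \<in> prefixes_to n w \<Longrightarrow> path_prefix n (splice n p x) = p"
  unfolding prefixes_to_def using path_prefix_splice by blast

lemma finite_prefixes_to: "finite (prefixes_to n w)"
proof (rule finite_subset)
  show "prefixes_to n w \<subseteq> Pi\<^sub>E {..<n} (\<lambda>i. E (Suc i))"
    unfolding prefixes_to_def path_prefix_def image_subset_iff restrict_PiE_iff
    using path_edge by blast
  show "finite (Pi\<^sub>E {..<n} (\<lambda>i. E (Suc i)))"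
    by (intro finite_PiE) (auto simp: finite_E)
qed

context
  fixes n w p q
  assumes p: "p \<in> prefixes_to n w" and q: "q \<in> prefixes_to n w"
begin

lemma prefix_swap_in_path_space: "x \<in> X \<Longrightarrow> prefix_swap n p q x \<in> X"
  using src_if_path_prefix_in_prefixes_to[OF p] src_if_path_prefix_in_prefixes_to[OF q]
    splice_prefix_in_path_space[OF p] splice_prefix_in_path_space[OF q]
  by (auto simp: prefix_swap_def)

lemma prefix_swap_prefix_swap: "prefix_swap n p q (prefix_swap n p q x) = x"
  using path_prefix_splice_prefixes_to[OF p] path_prefix_splice_prefixes_to[OF q]
  by (auto simp: prefix_swap_def splice_splice splice_path_prefix)

lemma path_prefix_prefix_swap: "path_prefix n (prefix_swap n p q x) = p \<longleftrightarrow> path_prefix n x = q"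
  using path_prefix_splice_prefixes_to[OF p] path_prefix_splice_prefixes_to[OF q]
  by (auto simp: prefix_swap_def)

lemma prefix_swap_in_Gn: "prefix_swap n p q \<in> Gn T n"
proof -
  have local: "prefix_swap n p q x i = prefix_swap n p q y i"
    if "\<forall>j<max (Suc i) n. x j = y j" for x y :: "nat \<Rightarrow> 'e" and i
  proof -
    have "path_prefix n x = path_prefix n y"
      unfolding path_prefix_eq_iff using that by simp
    then show ?thesis
      using that by (simp add: prefix_swap_def splice_def)
  qed
  have "continuous_map T T (prefix_swap n p q)"
  proof (rule continuous_map_finitely_determined[OF prefix_swap_in_path_space])
    show "\<exists>K. \<forall>x\<in>X. \<forall>y\<in>X. (\<forall>j<K. x j = y j) \<longrightarrow> prefix_swap n p q x i = prefix_swap n p q y i" for i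
      using local by (intro exI[of _ "max (Suc i) n"]) blast
  qed
  then have "homeomorphic_map T T (prefix_swap n p q)"
    unfolding homeomorphic_map_maps homeomorphic_maps_def
    using prefix_swap_prefix_swap by blast
  moreover have "\<forall>i\<ge>n. prefix_swap n p q x i = x i" for x
    by (simp add: prefix_swap_def splice_def)
  moreover have "\<forall>i<n. prefix_swap n p q x i = prefix_swap n p q y i" if "\<forall>i<n. x i = y i" for x y
    using local that by simp
  ultimately show ?thesis
    unfolding Gn_def by blast
qed

end

lemma invariant_set_Gn_if_tail_determined:
  assumes SX: "S \<subseteq> X"
    and det: "\<And>x y. x \<in> X \<Longrightarrow> y \<in> X \<Longrightarrow> \<forall>i\<ge>n. x i = y i \<Longrightarrow> x \<in> S \<Longrightarrow> y \<in> S"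
  shows "invariant_set (Gn T n) S"
  unfolding invariant_set_def
proof
  fix g assume "g \<in> Gn T n"
  then have hom: "homeomorphic_map T T g" and tail: "\<And>x i. x \<in> X \<Longrightarrow> n \<le> i \<Longrightarrow> g x i = x i"
    by (auto simp: Gn_def topspace_T)
  have gX: "g ` X = X"
    using homeomorphic_imp_surjective_map[OF hom] by (simp add: topspace_T)
  have gS: "g x \<in> S \<longleftrightarrow> x \<in> S" if "x \<in> X" for x
    using det[of x "g x"] det[of "g x" x] that gX tail SX by auto
  show "g ` S = S"
  proof (intro equalityI subsetI)
    show "y \<in> S" if "y \<in> g ` S" for y
      using that gS SX by blast
    show "y \<in> g ` S" if "y \<in> S" for y
    proof -
      obtain x where "x \<in> X" "y = g x"
        using \<open>y \<in> S\<close> gX SX by blast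
      then show ?thesis
        using gS \<open>y \<in> S\<close> by blast
    qed
  qed
qed

lemma invariant_set_full_group_if_tail_determined:
  assumes "S \<subseteq> X"
    and "\<And>x y n. x \<in> X \<Longrightarrow> y \<in> X \<Longrightarrow> \<forall>i\<ge>n. x i = y i \<Longrightarrow> x \<in> S \<Longrightarrow> y \<in> S"
  shows "invariant_set (full_group T) S"
proof -
  have "invariant_set (Gn T n) S" for n
    by (rule invariant_set_Gn_if_tail_determined[OF assms(1)]) (rule assms(2))
  then show ?thesis
    unfolding invariant_set_def full_group_def by blast
qed

definition cylinder :: "nat \<Rightarrow> (nat \<Rightarrow> 'e) \<Rightarrow> (nat \<Rightarrow> 'e) set" where
  "cylinder n p = {x\<in>X. path_prefix n x = p}"

definition paths_through :: "nat \<Rightarrow> 'v \<Rightarrow> (nat \<Rightarrow> 'e) set" where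
  "paths_through n w = {x\<in>X. src (x n) = w}"

lemma paths_through_eq_UN_cylinder: "paths_through n w = (\<Union>p\<in>prefixes_to n w. cylinder n p)"
proof
  show "paths_through n w \<subseteq> (\<Union>p\<in>prefixes_to n w. cylinder n p)"
    by (auto simp: paths_through_def cylinder_def prefixes_to_def)
  show "(\<Union>p\<in>prefixes_to n w. cylinder n p) \<subseteq> paths_through n w"
  proof
    fix x assume "x \<in> (\<Union>p\<in>prefixes_to n w. cylinder n p)"
    then obtain p where "p \<in> prefixes_to n w" "x \<in> X" "path_prefix n x = p"
      by (auto simp: cylinder_def)
    then have "src (x n) = w"
      by (rule src_if_path_prefix_in_prefixes_to)
    then show "x \<in> paths_through n w"
      using \<open>x \<in> X\<close> by (simp add: paths_through_def)
  qed
qed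

lemma invariant_set_paths_through: "n \<le> k \<Longrightarrow> invariant_set (Gn T n) (paths_through k w)"
  by (rule invariant_set_Gn_if_tail_determined) (auto simp: paths_through_def)

end

section \<open>Invariant measures on the path space\<close>

locale bratteli_measure = bratteli_diagram V E src rng v0
  for V :: "nat \<Rightarrow> 'v set" and E :: "nat \<Rightarrow> 'e set"
    and src rng :: "'e \<Rightarrow> 'v" and v0 :: 'v +
  fixes \<mu> :: "(nat \<Rightarrow> 'e) measure"
  assumes borel_prob: "borel_prob T \<mu>"
    and invariant: "invariant_measure (full_group T) \<mu>"
begin

sublocale prob_space \<mu>
  using borel_prob by (simp add: borel_prob_def)

lemma space_\<mu>: "space \<mu> = X"
  using borel_prob by (simp add: borel_prob_def topspace_T)

lemma sets_openin: "openin T U \<Longrightarrow> U \<in> sets \<mu>"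
  using borel_prob by (auto simp: borel_prob_def intro: sigma_sets.Basic)

lemma sets_finitely_determined:
  assumes "\<And>x y. x \<in> X \<Longrightarrow> y \<in> X \<Longrightarrow> \<forall>i<K. x i = y i \<Longrightarrow> P x \<Longrightarrow> P y"
  shows "{x\<in>X. P x} \<in> sets \<mu>"
  using assms by (intro sets_openin openin_finitely_determined) blast

lemma measurable_finitely_determined:
  assumes "\<And>x y. x \<in> X \<Longrightarrow> y \<in> X \<Longrightarrow> \<forall>i<K. x i = y i \<Longrightarrow> h x = h y"
  shows "h \<in> borel_measurable \<mu>"
proof (rule borel_measurableI)
  fix S
  have "{x\<in>X. h x \<in> S} \<in> sets \<mu>"
    using assms by (intro sets_finitely_determined[of K]) metis
  then show "h -` S \<inter> space \<mu> \<in> sets \<mu>"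
    by (simp add: space_\<mu> Int_def conj_commute)
qed

lemma sets_cylinder: "cylinder n p \<in> sets \<mu>"
  unfolding cylinder_def by (rule sets_finitely_determined[of n]) (auto simp: path_prefix_eq_iff)

lemma sets_paths_through: "paths_through n w \<in> sets \<mu>"
  unfolding paths_through_def by (rule sets_finitely_determined[of "Suc n"]) auto

text \<open>Swapping two prefixes ending at the same vertex is an element of G_n, and it maps
  one cylinder onto the other while fixing every G_n-invariant set.\<close>
lemma measure_cylinder_inter_Gn_invariant:
  assumes p: "p \<in> prefixes_to n w" and q: "q \<in> prefixes_to n w"
    and S: "S \<in> sets \<mu>" "invariant_set (Gn T n) S"
  shows "measure \<mu> (cylinder n p \<inter> S) = measure \<mu> (cylinder n q \<inter> S)"
proof -
  let ?g = "prefix_swap n p q"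
  have g_Gn: "?g \<in> Gn T n"
    using p q by (rule prefix_swap_in_Gn)
  have "?g x \<in> S \<longleftrightarrow> x \<in> S" for x
  proof
    assume "?g x \<in> S"
    then have "?g (?g x) \<in> ?g ` S" by blast
    then show "x \<in> S"
      using S(2) g_Gn prefix_swap_prefix_swap[OF p q] by (simp add: invariant_set_def)
  qed (use S(2) g_Gn in \<open>auto simp: invariant_set_def\<close>)
  then have "?g -` (cylinder n p \<inter> S) \<inter> space \<mu> = cylinder n q \<inter> S"
    using prefix_swap_in_path_space[OF p q] path_prefix_prefix_swap[OF p q]
      sets.sets_into_space[OF S(1)]
    by (auto simp: space_\<mu> cylinder_def)
  moreover have "?g \<in> full_group T"
    using g_Gn by (auto simp: full_group_def)
  ultimately show ?thesis
    using invariant S(1) sets_cylinder unfolding invariant_measure_def by (metis sets.Int)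
qed

lemma measure_UN_cylinder_inter_Gn_invariant:
  assumes Q: "Q \<subseteq> prefixes_to n w" and p: "p \<in> prefixes_to n w"
    and S: "S \<in> sets \<mu>" "invariant_set (Gn T n) S"
  shows "measure \<mu> ((\<Union>q\<in>Q. cylinder n q) \<inter> S) = card Q * measure \<mu> (cylinder n p \<inter> S)"
proof -
  have "measure \<mu> ((\<Union>q\<in>Q. cylinder n q) \<inter> S) = measure \<mu> (\<Union>q\<in>Q. cylinder n q \<inter> S)"
    by (simp add: Int_UN_distrib2)
  also have "\<dots> = (\<Sum>q\<in>Q. measure \<mu> (cylinder n q \<inter> S))"
    using finite_subset[OF Q finite_prefixes_to] sets_cylinder S(1)
    by (intro finite_measure_finite_Union) (auto simp: disjoint_family_on_def cylinder_def)
  also have "\<dots> = (\<Sum>q\<in>Q. measure \<mu> (cylinder n p \<inter> S))"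
    using Q measure_cylinder_inter_Gn_invariant[OF _ p S] by (intro sum.cong) auto
  also have "\<dots> = card Q * measure \<mu> (cylinder n p \<inter> S)"
    by simp
  finally show ?thesis .
qed

end

locale bratteli_event = bratteli_measure V E src rng v0 \<mu>
  for V :: "nat \<Rightarrow> 'v set" and E :: "nat \<Rightarrow> 'e set"
    and src rng :: "'e \<Rightarrow> 'v" and v0 :: 'v and \<mu> :: "(nat \<Rightarrow> 'e) measure" +
  fixes A :: "(nat \<Rightarrow> 'e) set" and m :: nat
  assumes A_subset: "A \<subseteq> X"
    and A_determined: "\<And>x y. x \<in> A \<Longrightarrow> y \<in> X \<Longrightarrow> \<forall>i<m. x i = y i \<Longrightarrow> y \<in> A"
begin

definition A_prefixes_to :: "nat \<Rightarrow> 'v \<Rightarrow> (nat \<Rightarrow> 'e) set" where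
  "A_prefixes_to n w = {p \<in> prefixes_to n w. \<exists>x\<in>A. path_prefix n x = p}"

(* At a vertex reached by no path this is 0 / 0 = 0. *)
definition freq :: "nat \<Rightarrow> 'v \<Rightarrow> real" where
  "freq n w = card (A_prefixes_to n w) / card (prefixes_to n w)"

definition freq_path :: "nat \<Rightarrow> (nat \<Rightarrow> 'e) \<Rightarrow> real" where
  "freq_path n x = freq n (src (x n))"

lemma sets_A: "A \<in> sets \<mu>"
proof -
  have "{x\<in>X. x \<in> A} \<in> sets \<mu>"
    using A_determined by (intro sets_finitely_determined[of m]) blast
  then show ?thesis
    using A_subset by (simp add: Int_absorb1 Int_def[symmetric])
qed

lemma measurable_freq_path: "freq_path n \<in> borel_measurable \<mu>"
  unfolding freq_path_def by (rule measurable_finitely_determined[of "Suc n"]) simp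

lemma freq_range: "0 \<le> freq n w \<and> freq n w \<le> 1"
proof -
  have "card (A_prefixes_to n w) \<le> card (prefixes_to n w)"
    using finite_prefixes_to by (intro card_mono) (auto simp: A_prefixes_to_def)
  then show ?thesis
    by (cases "card (prefixes_to n w) = 0") (simp_all add: freq_def divide_le_eq_1)
qed

lemma freq_path_range: "0 \<le> freq_path n x \<and> freq_path n x \<le> 1"
  unfolding freq_path_def by (rule freq_range)

lemma integrable_freq_path: "integrable \<mu> (freq_path n)"
  using freq_path_range by (intro integrable_bounded[OF measurable_freq_path, where B=1]) auto

lemma A_inter_paths_through_eq_UN_cylinder:
  assumes "m \<le> n"
  shows "A \<inter> paths_through n w = (\<Union>p\<in>A_prefixes_to n w. cylinder n p)"
proof
  show "A \<inter> paths_through n w \<subseteq> (\<Union>p\<in>A_prefixes_to n w. cylinder n p)"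
    using A_subset by (force simp: paths_through_def A_prefixes_to_def prefixes_to_def cylinder_def)
  show "(\<Union>p\<in>A_prefixes_to n w. cylinder n p) \<subseteq> A \<inter> paths_through n w"
  proof
    fix x assume "x \<in> (\<Union>p\<in>A_prefixes_to n w. cylinder n p)"
    then obtain p y where p: "p \<in> prefixes_to n w" "y \<in> A" "path_prefix n y = p"
      and x: "x \<in> X" "path_prefix n x = p"
      by (auto simp: A_prefixes_to_def cylinder_def)
    then have "\<forall>i<m. y i = x i"
      using assms by (metis order_less_le_trans path_prefix_eq_iff)
    then show "x \<in> A \<inter> paths_through n w"
      using A_determined p x src_if_path_prefix_in_prefixes_to[OF p(1) x] by (auto simp: paths_through_def)
  qed
qed

lemma freq_mult_measure_paths_through:
  assumes "m \<le> n" and S: "S \<in> sets \<mu>" "invariant_set (Gn T n) S"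
  shows "freq n w * measure \<mu> (paths_through n w \<inter> S) = measure \<mu> (A \<inter> paths_through n w \<inter> S)"
proof (cases "prefixes_to n w = {}")
  case True
  then show ?thesis by (simp add: paths_through_eq_UN_cylinder)
next
  case False
  then obtain p where p: "p \<in> prefixes_to n w" by blast
  have "A_prefixes_to n w \<subseteq> prefixes_to n w"
    by (auto simp: A_prefixes_to_def)
  then have "measure \<mu> (A \<inter> paths_through n w \<inter> S) = card (A_prefixes_to n w) * measure \<mu> (cylinder n p \<inter> S)"
    using measure_UN_cylinder_inter_Gn_invariant[OF _ p S] A_inter_paths_through_eq_UN_cylinder[OF assms(1)]
    by simp
  moreover have "measure \<mu> (paths_through n w \<inter> S) = card (prefixes_to n w) * measure \<mu> (cylinder n p \<inter> S)"
    using measure_UN_cylinder_inter_Gn_invariant[OF order_refl p S] by (simp add: paths_through_eq_UN_cylinder)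
  moreover have "card (prefixes_to n w) \<noteq> 0"
    using False finite_prefixes_to by simp
  ultimately show ?thesis
    by (simp add: freq_def)
qed

lemma freq_path_eq_sum:
  assumes "x \<in> X"
  shows "freq_path n x = (\<Sum>w\<in>V n. freq n w * indicator (paths_through n w) x)"
proof -
  have "(\<Sum>w\<in>V n. freq n w * indicator (paths_through n w) x) = (\<Sum>w\<in>V n. if w = src (x n) then freq n w else 0)"
    using assms by (intro sum.cong) (auto simp: paths_through_def)
  also have "\<dots> = freq_path n x"
    using src_path_in_V[OF assms] finite_V by (simp add: freq_path_def)
  finally show ?thesis by simp
qed

lemma integral_mult_freq_path:
  assumes g: "integrable \<mu> g"
  shows "(\<integral>x. g x * freq_path n x \<partial>\<mu>) = (\<Sum>w\<in>V n. freq n w * (\<integral>x. g x * indicator (paths_through n w) x \<partial>\<mu>))"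
proof -
  have "(\<integral>x. g x * freq_path n x \<partial>\<mu>) = (\<integral>x. (\<Sum>w\<in>V n. freq n w * (g x * indicator (paths_through n w) x)) \<partial>\<mu>)"
    by (intro Bochner_Integration.integral_cong)
       (auto simp: space_\<mu> freq_path_eq_sum sum_distrib_left mult.left_commute)
  also have "\<dots> = (\<Sum>w\<in>V n. freq n w * (\<integral>x. g x * indicator (paths_through n w) x \<partial>\<mu>))"
    using integrable_mult_indicator[OF sets_paths_through g]
    by (subst Bochner_Integration.integral_sum) (auto simp: mult.commute)
  finally show ?thesis .
qed

lemma integral_freq_path_indicator:
  assumes "m \<le> n" and S: "S \<in> sets \<mu>" "invariant_set (Gn T n) S"
  shows "(\<integral>x. indicator S x * freq_path n x \<partial>\<mu>) = measure \<mu> (A \<inter> S)"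
proof -
  have "(\<integral>x. indicator S x * freq_path n x \<partial>\<mu>) = (\<Sum>w\<in>V n. freq n w * measure \<mu> (paths_through n w \<inter> S))"
    using S(1) sets_paths_through
    by (simp add: integral_mult_freq_path emeasure_eq_measure indicator_inter_arith[symmetric] Int_commute)
  also have "\<dots> = (\<Sum>w\<in>V n. measure \<mu> (A \<inter> paths_through n w \<inter> S))"
    using freq_mult_measure_paths_through[OF assms] by simp
  also have "\<dots> = measure \<mu> (\<Union>w\<in>V n. A \<inter> paths_through n w \<inter> S)"
    using sets_A sets_paths_through S(1) finite_V
    by (intro finite_measure_finite_Union[symmetric]) (auto simp: disjoint_family_on_def paths_through_def)
  also have "(\<Union>w\<in>V n. A \<inter> paths_through n w \<inter> S) = A \<inter> S"
    using A_subset src_path_in_V by (auto simp: paths_through_def)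
  finally show ?thesis .
qed

lemma integral_freq_path:
  assumes "m \<le> n"
  shows "(\<integral>x. freq_path n x \<partial>\<mu>) = measure \<mu> A"
proof -
  have "X \<in> sets \<mu>"
    using sets.top[of \<mu>] by (simp add: space_\<mu>)
  moreover have "invariant_set (Gn T n) X"
    by (rule invariant_set_Gn_if_tail_determined) auto
  ultimately have "(\<integral>x. indicator X x * freq_path n x \<partial>\<mu>) = measure \<mu> (A \<inter> X)"
    by (rule integral_freq_path_indicator[OF assms])
  moreover have "(\<integral>x. freq_path n x \<partial>\<mu>) = (\<integral>x. indicator X x * freq_path n x \<partial>\<mu>)"
    by (rule Bochner_Integration.integral_cong) (auto simp: space_\<mu>)
  ultimately show ?thesis
    using A_subset by (simp add: Int_absorb2)
qed

lemma integral_freq_path_mult: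
  assumes "m \<le> n" "n \<le> k"
  shows "(\<integral>x. freq_path n x * freq_path k x \<partial>\<mu>) = (\<integral>x. (freq_path k x)\<^sup>2 \<partial>\<mu>)"
proof -
  have "(\<integral>x. freq_path n x * freq_path k x \<partial>\<mu>)
      = (\<Sum>w\<in>V k. freq k w * (\<integral>x. freq_path n x * indicator (paths_through k w) x \<partial>\<mu>))"
    by (rule integral_mult_freq_path[OF integrable_freq_path])
  also have "\<dots> = (\<Sum>w\<in>V k. freq k w * measure \<mu> (A \<inter> paths_through k w))"
    using integral_freq_path_indicator[OF assms(1) sets_paths_through invariant_set_paths_through[OF assms(2)]]
    by (simp add: mult.commute)
  also have "\<dots> = (\<Sum>w\<in>V k. freq k w * (\<integral>x. freq_path k x * indicator (paths_through k w) x \<partial>\<mu>))"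
    using integral_freq_path_indicator[OF order_trans[OF assms] sets_paths_through invariant_set_paths_through[OF order_refl]]
    by (simp add: mult.commute)
  also have "\<dots> = (\<integral>x. freq_path k x * freq_path k x \<partial>\<mu>)"
    by (rule integral_mult_freq_path[OF integrable_freq_path, symmetric])
  finally show ?thesis
    by (simp add: power2_eq_square)
qed

lemma measure_lim_freq_path_dichotomy:
  assumes ergodic: "ergodic_measure (full_group T) \<mu>" and r: "strict_mono r"
  shows "measure \<mu> {x\<in>space \<mu>. c < lim (\<lambda>j. freq_path (r j) x)} \<in> {0, 1} \<and>
         measure \<mu> {x\<in>space \<mu>. lim (\<lambda>j. freq_path (r j) x) < c} \<in> {0, 1}"
proof -
  define F where "F x = lim (\<lambda>j. freq_path (r j) x)" for x
  have F_measurable: "F \<in> borel_measurable \<mu>"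
    unfolding F_def by (rule borel_measurable_lim_metric) (rule measurable_freq_path)
  have tail: "F x = F y" if "\<forall>i\<ge>n. x i = y i" for x y n
  proof -
    have "\<forall>\<^sub>F j in sequentially. freq_path (r j) x = freq_path (r j) y"
    proof (rule eventually_sequentiallyI)
      fix j assume "n \<le> j"
      then have "n \<le> r j"
        using seq_suble[OF r, of j] by linarith
      then show "freq_path (r j) x = freq_path (r j) y"
        using that by (simp add: freq_path_def)
    qed
    from tendsto_cong[OF this] show ?thesis
      unfolding F_def lim_def by simp
  qed
  have invariant: "invariant_set (full_group T) {x\<in>space \<mu>. P (F x)}" for P
  proof (rule invariant_set_full_group_if_tail_determined)
    fix x y n assume "\<forall>i\<ge>n. x i = y i" "y \<in> X" "x \<in> {x\<in>space \<mu>. P (F x)}"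
    then show "y \<in> {x\<in>space \<mu>. P (F x)}"
      using tail[of n x y] by (simp add: space_\<mu>)
  qed (simp add: space_\<mu>)
  have "{x\<in>space \<mu>. c < F x} \<in> sets \<mu>"
    by (rule borel_measurable_iff_greater[THEN iffD1, OF F_measurable, rule_format])
  moreover have "{x\<in>space \<mu>. F x < c} \<in> sets \<mu>"
    by (rule borel_measurable_iff_less[THEN iffD1, OF F_measurable, rule_format])
  ultimately show ?thesis
    using ergodic[unfolded ergodic_measure_def, rule_format]
      invariant[of "\<lambda>t. c < t"] invariant[of "\<lambda>t. t < c"]
    unfolding F_def[symmetric] by blast
qed

lemma tendsto_integral_abs_freq_path:
  assumes "ergodic_measure (full_group T) \<mu>"
  shows "(\<lambda>n. \<integral>x. \<bar>freq_path (n + m) x - measure \<mu> A\<bar> \<partial>\<mu>) \<longlonglongrightarrow> 0"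
proof -
  interpret shifted: unit_interval_sequence \<mu> "\<lambda>n. freq_path (n + m)"
    using measurable_freq_path freq_path_range by unfold_locales
  show ?thesis
  proof (rule shifted.tendsto_L1_const_if_orthogonal_increments)
    show "(\<integral>x. freq_path (n + m) x * freq_path (k + m) x \<partial>\<mu>) = (\<integral>x. (freq_path (k + m) x)\<^sup>2 \<partial>\<mu>)"
      if "n \<le> k" for n k
      using that by (intro integral_freq_path_mult) simp_all
    show "(\<integral>x. freq_path (n + m) x \<partial>\<mu>) = measure \<mu> A" for n
      by (intro integral_freq_path) simp
    show "measure \<mu> {x\<in>space \<mu>. measure \<mu> A < lim (\<lambda>j. freq_path (r j + m) x)} \<in> {0, 1} \<and>
        measure \<mu> {x\<in>space \<mu>. lim (\<lambda>j. freq_path (r j + m) x) < measure \<mu> A} \<in> {0, 1}"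
      if "strict_mono r" for r
      using that assms
      by (intro measure_lim_freq_path_dichotomy) (simp_all add: strict_mono_def)
  qed
qed

lemma measure_inter_Gn_invariant_approx:
  assumes "m \<le> n" and S: "S \<in> sets \<mu>" "invariant_set (Gn T n) S"
  shows "\<bar>measure \<mu> (A \<inter> S) - measure \<mu> A * measure \<mu> S\<bar>
    \<le> (\<integral>x. \<bar>freq_path n x - measure \<mu> A\<bar> \<partial>\<mu>)"
proof -
  have "integrable \<mu> (\<lambda>x. indicator S x * freq_path n x)"
    using integrable_mult_indicator[OF S(1) integrable_freq_path] by simp
  moreover have "integrable \<mu> (\<lambda>x. indicator S x * measure \<mu> A)"
    using S(1) by (intro integrable_mult_left integrable_real_indicator) (simp_all add: emeasure_eq_measure)
  ultimately have "(\<integral>x. indicator S x * (freq_path n x - measure \<mu> A) \<partial>\<mu>)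
      = (\<integral>x. indicator S x * freq_path n x \<partial>\<mu>) - (\<integral>x. indicator S x * measure \<mu> A \<partial>\<mu>)"
    by (simp add: right_diff_distrib)
  also have "\<dots> = measure \<mu> (A \<inter> S) - measure \<mu> A * measure \<mu> S"
    using integral_freq_path_indicator[OF assms] S(1) by (simp add: emeasure_eq_measure)
  finally have "measure \<mu> (A \<inter> S) - measure \<mu> A * measure \<mu> S
      = (\<integral>x. indicator S x * (freq_path n x - measure \<mu> A) \<partial>\<mu>)" ..
  also have "\<bar>\<dots>\<bar> \<le> (\<integral>x. \<bar>indicator S x * (freq_path n x - measure \<mu> A)\<bar> \<partial>\<mu>)"
    using integral_norm_bound[of \<mu> "\<lambda>x. indicator S x * (freq_path n x - measure \<mu> A)"] by simp
  also have "\<dots> \<le> (\<integral>x. \<bar>freq_path n x - measure \<mu> A\<bar> \<partial>\<mu>)"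
  proof (rule integral_mono)
    have diff: "integrable \<mu> (\<lambda>x. freq_path n x - measure \<mu> A)"
      using integrable_freq_path by simp
    then show "integrable \<mu> (\<lambda>x. \<bar>freq_path n x - measure \<mu> A\<bar>)"
      by (rule integrable_abs)
    have "integrable \<mu> (\<lambda>x. indicator S x * (freq_path n x - measure \<mu> A))"
      using integrable_mult_indicator[OF S(1) diff] by simp
    then show "integrable \<mu> (\<lambda>x. \<bar>indicator S x * (freq_path n x - measure \<mu> A)\<bar>)"
      by (rule integrable_abs)
  qed (simp add: indicator_def)
  finally show ?thesis .
qed

lemma tendsto_measure_inter_Gn_invariant:
  assumes ergodic: "ergodic_measure (full_group T) \<mu>"
    and S: "\<And>n. S n \<in> sets \<mu>" "\<And>n. invariant_set (Gn T n) (S n)"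
    and lim: "(\<lambda>n. measure \<mu> (S n)) \<longlonglongrightarrow> s"
  shows "(\<lambda>n. measure \<mu> (A \<inter> S n)) \<longlonglongrightarrow> measure \<mu> A * s"
proof -
  have "norm (measure \<mu> (A \<inter> S (n + m)) - measure \<mu> A * measure \<mu> (S (n + m)))
      \<le> (\<integral>x. \<bar>freq_path (n + m) x - measure \<mu> A\<bar> \<partial>\<mu>)" for n
    using measure_inter_Gn_invariant_approx[OF le_add2 S] by simp
  then have "(\<lambda>n. measure \<mu> (A \<inter> S (n + m)) - measure \<mu> A * measure \<mu> (S (n + m))) \<longlonglongrightarrow> 0"
    by (intro Lim_null_comparison[OF always_eventually tendsto_integral_abs_freq_path[OF ergodic]]) simp
  moreover have "(\<lambda>n. measure \<mu> A * measure \<mu> (S (n + m))) \<longlonglongrightarrow> measure \<mu> A * s"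
    using LIMSEQ_ignore_initial_segment[OF lim] by (rule tendsto_mult_left)
  ultimately have "(\<lambda>n. (measure \<mu> (A \<inter> S (n + m)) - measure \<mu> A * measure \<mu> (S (n + m)))
      + measure \<mu> A * measure \<mu> (S (n + m))) \<longlonglongrightarrow> 0 + measure \<mu> A * s"
    by (rule tendsto_add)
  then have "(\<lambda>n. measure \<mu> (A \<inter> S (n + m))) \<longlonglongrightarrow> measure \<mu> A * s"
    by simp
  then show ?thesis
    by (rule LIMSEQ_offset)
qed

end

theorem mainTheorem14:
  fixes V :: "nat \<Rightarrow> 'v set" and E :: "nat \<Rightarrow> 'e set"
    and src rng :: "'e \<Rightarrow> 'v" and v0 :: 'v
    and \<mu> :: "(nat \<Rightarrow> 'e) measure"
    and B :: "(nat \<Rightarrow> 'e) set" and Bn :: "nat \<Rightarrow> (nat \<Rightarrow> 'e) set"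
  defines "T \<equiv> path_topology E src rng v0"
  assumes "bratteli V E src rng v0"
    and "cantor_space T"
    and "minimal_action T (full_group T)"
    and "borel_prob T \<mu>"
    and "invariant_measure (full_group T) \<mu>"
    and "ergodic_measure (full_group T) \<mu>"
    and "clopen_in T B"
    and "\<And>n. clopen_in T (Bn n) \<and> invariant_set (Gn T n) (Bn n)"
    and "(\<lambda>n. measure \<mu> (Bn n)) \<longlonglongrightarrow> measure \<mu> B"
    and "measure \<mu> B > 0"
  shows "\<forall>A. clopen_in T A \<longrightarrow>
           (\<lambda>n. measure \<mu> (A \<inter> Bn n)) \<longlonglongrightarrow> measure \<mu> A * measure \<mu> B"
proof (intro allI impI)
  fix A assume A: "clopen_in T A"
  interpret bratteli_measure V E src rng v0 \<mu>
    by unfold_locales (use assms(2,5,6) in \<open>simp_all only: T_def\<close>)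
  have "compact_space T"
    using assms(3) by (simp add: cantor_space_def)
  then obtain m where m: "\<forall>x\<in>A. \<forall>y\<in>X. (\<forall>i<m. x i = y i) \<longrightarrow> y \<in> A"
    using clopen_finitely_determined A unfolding T_def by blast
  interpret bratteli_event V E src rng v0 \<mu> A m
  proof unfold_locales
    show "A \<subseteq> X"
      using A openin_subset[of T A] by (simp add: T_def clopen_in_def topspace_T)
  qed (use m in blast)
  have Bn: "Bn n \<in> sets \<mu>" "invariant_set (Gn (path_topology E src rng v0) n) (Bn n)" for n
    using assms(9)[of n] sets_openin[of "Bn n"] by (simp_all add: T_def clopen_in_def)
  show "(\<lambda>n. measure \<mu> (A \<inter> Bn n)) \<longlonglongrightarrow> measure \<mu> A * measure \<mu> B"
    by (rule tendsto_measure_inter_Gn_invariant[where S=Bn, OF assms(7)[unfolded T_def] Bn assms(10)])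
qed

end
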